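(* Assume (A1) and (A2). Let $R\ge1$ and $f_*\in\mathcal H_K$ with $\|f_*\|_K\le R$. Then for every $\delta\in(0,1)$, with probability at least $1-\frac\delta2$, $$\mathcal F_{\mathbf z}(f_* )\le\big(C'_1+2\sqrt{c_\tau}\big)\log\frac2\delta\cdot\max\Big\{\frac{R^{q+1}}{m},\ \Big(\frac{R^{2+q-\tau}}{m}\Big)^{\frac{1}{2-\tau}},\ \mathcal A(f_* )\Big\},$$ where $C'_1>0$ is a constant depending only on $q,c_q,\kappa,\|f_\rho^V\|_\infty$ (independent of $m,\delta,R,f_*$).
   Context: Setting. $X$ is a separable metric space, $Y\subseteq\mathbb{R}$, $Z=X\times Y$, and $\rho$ is a Borel probability measure on $Z$. A loss $V:\mathbb{R}\times\mathbb{R}\to[0,\infty)$ is measurable and convex in its second argument; $V'_-(y,a)$ denotes the left derivative of $a\mapsto V(y,a)$. The expected risk is $\mathcal{E}(f)=\int_Z V(y,f(x))\,d\rho(x,y)$, and it is assumed that there is a measurable $f_\rho^V:X\to\mathbb{R}$ minimizing $\mathcal{E}$ over all measurable functions. A sample $\mathbf{z}=\{(x_i,y_i)\}_{i=1}^m$ is drawn i.i.d. from $\rho$, and $\mathcal{E}_{\mathbf z}(f)=\frac1m\sum_{i=1}^m V(y_i,f(x_i))$ is the empirical risk. $K:X\times X\to\mathbb{R}$ is a reproducing kernel with reproducing kernel Hilbert space $(\mathcal{H}_K,\|\cdot\|_K)$, and $B_R=\{f\in\mathcal{H}_K:\|f\|_K\le R\}$. Probabilities are over the draw of $\mathbf z\sim\rho^m$.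 Error quantities: $\mathcal A(f)=\mathcal{E}(f)-\mathcal{E}(f_\rho^V)$; $\mathcal F_{\mathbf z}(f)=\max\{(\mathcal{E}_{\mathbf z}(f)-\mathcal{E}_{\mathbf z}(f_\rho^V))-(\mathcal{E}(f)-\mathcal{E}(f_\rho^V)),0\}$. Assumption (A1): $\kappa:=\sup_{x\in X}\sqrt{K(x,x)}<\infty$, $\|f_\rho^V\|_\infty<\infty$, $|V|_0:=\sup_{y\in Y}V(y,0)<\infty$, and there are $q\ge 0$, $c_q>0$ with $|V'_-(y,a)|\le c_q(1+|a|^q)$ for all $a\in\mathbb{R}$, $y\in Y$. Assumption (A2) (variance condition, with $q$ from (A1)): there are $\tau\in[0,1]$ and $c_\tau>0$ such that for every $R\ge1$ and every $f\in B_R$, $\int_Z\big(V(y,f(x))-V(y,f_\rho^V(x))\big)^2d\rho\le c_\tau R^{2+q-\tau}\big(\mathcal{E}(f)-\mathcal{E}(f_\rho^V)\big)^\tau$. *)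

theory Defs
  imports "HOL-Probability.Probability"
begin

text \<open>Real power with the convention 0 powered 0 equals 1 (Isabelle's powr gives 0 there).\<close>
definition rpow :: "real \<Rightarrow> real \<Rightarrow> real" where
  "rpow x a = (if x = 0 then (if a = 0 then 1 else 0) else x powr a)"

definition left_deriv :: "(real \<Rightarrow> real) \<Rightarrow> real \<Rightarrow> real" where
  "left_deriv g a = Lim (at_right 0) (\<lambda>h. (g a - g (a - h)) / h)"

section \<open>Reproducing kernel Hilbert space (Aronszajn construction, as a space of functions)\<close>

definition kcomb :: "('a \<Rightarrow> 'a \<Rightarrow> real) \<Rightarrow> nat \<Rightarrow> (nat \<Rightarrow> real) \<Rightarrow> (nat \<Rightarrow> 'a) \<Rightarrow> 'a \<Rightarrow> real" where
  "kcomb K n c p = (\<lambda>x. \<Sum>i<n. c i * K (p i) x)"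

definition kinner :: "('a \<Rightarrow> 'a \<Rightarrow> real) \<Rightarrow> nat \<Rightarrow> (nat \<Rightarrow> real) \<Rightarrow> (nat \<Rightarrow> 'a)
    \<Rightarrow> nat \<Rightarrow> (nat \<Rightarrow> real) \<Rightarrow> (nat \<Rightarrow> 'a) \<Rightarrow> real" where
  "kinner K n c p n' d q = (\<Sum>i<n. \<Sum>j<n'. c i * d j * K (p i) (q j))"

definition reproducing_kernel :: "('a \<Rightarrow> 'a \<Rightarrow> real) \<Rightarrow> bool" where
  "reproducing_kernel K \<longleftrightarrow> (\<forall>x y. K x y = K y x) \<and> (\<forall>n c p. kinner K n c p n c p \<ge> 0)"

definition rkhs_approx :: "('a \<Rightarrow> 'a \<Rightarrow> real) \<Rightarrow> ('a \<Rightarrow> real) \<Rightarrow> (nat \<Rightarrow> nat)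
    \<Rightarrow> (nat \<Rightarrow> nat \<Rightarrow> real) \<Rightarrow> (nat \<Rightarrow> nat \<Rightarrow> 'a) \<Rightarrow> bool" where
  "rkhs_approx K f N c p \<longleftrightarrow>
     (\<forall>x. (\<lambda>n. kcomb K (N n) (c n) (p n) x) \<longlonglongrightarrow> f x) \<and>
     (\<forall>e>0. \<exists>M. \<forall>n\<ge>M. \<forall>k\<ge>M.
        kinner K (N n) (c n) (p n) (N n) (c n) (p n)
        - 2 * kinner K (N n) (c n) (p n) (N k) (c k) (p k)
        + kinner K (N k) (c k) (p k) (N k) (c k) (p k) < e)"

definition in_rkhs :: "('a \<Rightarrow> 'a \<Rightarrow> real) \<Rightarrow> ('a \<Rightarrow> real) \<Rightarrow> bool" where
  "in_rkhs K f \<longleftrightarrow> (\<exists>N c p. rkhs_approx K f N c p)"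

text \<open>The RKHS norm: limit of the kernel norms of an approximating sequence
  (independent of the sequence; we take the infimum for definiteness).\<close>
definition rkhs_norm :: "('a \<Rightarrow> 'a \<Rightarrow> real) \<Rightarrow> ('a \<Rightarrow> real) \<Rightarrow> real" where
  "rkhs_norm K f = Inf {l. \<exists>N c p. rkhs_approx K f N c p \<and>
      (\<lambda>n. sqrt (kinner K (N n) (c n) (p n) (N n) (c n) (p n))) \<longlonglongrightarrow> l}"

definition expected_risk :: "('x \<times> real) measure \<Rightarrow> (real \<Rightarrow> real \<Rightarrow> real) \<Rightarrow> ('x \<Rightarrow> real) \<Rightarrow> real" where
  "expected_risk \<rho> V f = (\<integral>z. V (snd z) (f (fst z)) \<partial>\<rho>)"

definition empirical_risk :: "nat \<Rightarrow> (nat \<Rightarrow> 'x \<times> real) \<Rightarrow> (real \<Rightarrow> real \<Rightarrow> real) \<Rightarrow> ('x \<Rightarrow> real) \<Rightarrow> real" where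
  "empirical_risk m z V f = (1 / real m) * (\<Sum>i<m. V (snd (z i)) (f (fst (z i))))"

definition approx_err :: "('x \<times> real) measure \<Rightarrow> (real \<Rightarrow> real \<Rightarrow> real) \<Rightarrow> ('x \<Rightarrow> real) \<Rightarrow> ('x \<Rightarrow> real) \<Rightarrow> real" where
  "approx_err \<rho> V f\<rho> f = expected_risk \<rho> V f - expected_risk \<rho> V f\<rho>"

definition sample_err :: "('x \<times> real) measure \<Rightarrow> (real \<Rightarrow> real \<Rightarrow> real) \<Rightarrow> ('x \<Rightarrow> real)
    \<Rightarrow> nat \<Rightarrow> (nat \<Rightarrow> 'x \<times> real) \<Rightarrow> ('x \<Rightarrow> real) \<Rightarrow> real" where
  "sample_err \<rho> V f\<rho> m z f =
     max ((empirical_risk m z V f - empirical_risk m z V f\<rho>) - (expected_risk \<rho> V f - expected_risk \<rho> V f\<rho>)) 0"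

definition risk_minimizer :: "('x::topological_space \<times> real) measure \<Rightarrow> (real \<Rightarrow> real \<Rightarrow> real) \<Rightarrow> ('x \<Rightarrow> real) \<Rightarrow> bool" where
  "risk_minimizer \<rho> V f\<rho> \<longleftrightarrow> f\<rho> \<in> borel_measurable borel \<and>
     (\<forall>f \<in> borel_measurable borel.
        (\<integral>\<^sup>+z. ennreal (V (snd z) (f\<rho> (fst z))) \<partial>\<rho>) \<le> (\<integral>\<^sup>+z. ennreal (V (snd z) (f (fst z))) \<partial>\<rho>))"

end

theory Submission
  imports Defs
begin

text \<open>
  The sample error of \<open>f\<^sub>*\<close> is the positive part of the deviation of the sample mean of the
  excess loss \<open>g(x, y) = V(y, f\<^sub>*(x)) - V(y, f\<^sub>\<rho>(x))\<close> from its mean, the excess risk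
  \<open>A(f\<^sub>*)\<close>. The reproducing property gives \<open>|f\<^sub>*(x)| \<le> \<kappa> R\<close>, and a convex loss whose left
  derivative grows polynomially is Lipschitz on bounded intervals, so \<open>|g| \<le> C R^(q+1)\<close>; the
  variance condition bounds \<open>E g^2\<close> by \<open>c\<^sub>\<tau> R^(2+q-\<tau>) A(f\<^sub>*)^\<tau>\<close>. A one-sided Bernstein
  inequality, proved by the Chernoff bound with \<open>exp u \<le> 1 + u + 2u^2/3\<close> for \<open>u \<le> 1/2\<close>, bounds
  the deviation with probability \<open>1 - \<delta>/2\<close> by
  \<open>sqrt (8 E g^2 log(2/\<delta>) / 3m) + 8 C R^(q+1) log(2/\<delta>) / m\<close>.
  Both terms are at most a multiple of the maximum \<open>W\<close> of the three quantities in the bound,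
  the first one because \<open>R^(2+q-\<tau>) / m \<le> W^(2-\<tau>)\<close> and \<open>A(f\<^sub>*)^\<tau> \<le> W^\<tau>\<close>.
\<close>

section \<open>A one-sided Bernstein inequality\<close>

lemma exp_le_quadratic:
  fixes u :: real
  assumes "u \<le> 1/2"
  shows "exp u \<le> 1 + u + 2/3 * u\<^sup>2"
proof -
  obtain t where t: "\<bar>t\<bar> \<le> \<bar>u\<bar>" "exp u = (\<Sum>m<3. (u ^ m) / fact m) + (exp t / fact 3) * u ^ 3"
    using Maclaurin_exp_le[of u 3] by blast
  have e: "exp u = 1 + u + u\<^sup>2/2 + exp t / 6 * u ^ 3"
    using t(2) by (simp add: numeral_3_eq_3 power2_eq_square fact_numeral)
  show ?thesis
  proof (cases "u \<le> 0")
    case True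
    then have "exp t / 6 * u ^ 3 \<le> 0"
      by (simp add: mult_nonneg_nonpos power_le_zero_eq)
    then show ?thesis using e zero_le_power2[of u] by linarith
  next
    case False
    have "exp t \<le> exp (1/2)" using t(1) assms False by simp
    also have "\<dots> \<le> 2" using real_exp_bound_lemma[of "1/2"] by simp
    finally have "exp t / 6 * u ^ 3 \<le> 2 / 6 * u ^ 3"
      using False by (intro mult_right_mono divide_right_mono) auto
    also have "\<dots> = u\<^sup>2 * (u / 3)" by (simp add: power2_eq_square power3_eq_cube)
    also have "\<dots> \<le> u\<^sup>2 * (1/6)" using assms by (intro mult_left_mono) auto
    finally show ?thesis using e by simp
  qed
qed

context prob_space
begin

lemma nn_integral_exp_le_exp_variance:
  assumes small: "AE x in M. l * h x \<le> 1/2"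
    and int: "integrable M h" "integrable M (\<lambda>x. (h x)\<^sup>2)"
    and centred: "expectation h = 0" and var: "expectation (\<lambda>x. (h x)\<^sup>2) \<le> v"
  shows "(\<integral>\<^sup>+x. ennreal (exp (l * h x)) \<partial>M) \<le> ennreal (exp (2/3 * l\<^sup>2 * v))"
proof -
  have quadratic_nonneg: "0 \<le> 1 + u + 2/3 * u\<^sup>2" for u :: real
    using zero_le_power2[of "u + 3/4"] by (simp add: power2_eq_square algebra_simps)
  have int_quadratic: "integrable M (\<lambda>x. 1 + l * h x + 2/3 * (l * h x)\<^sup>2)"
    using int by (auto simp: power_mult_distrib)
  have "(\<integral>\<^sup>+x. ennreal (exp (l * h x)) \<partial>M) \<le> (\<integral>\<^sup>+x. ennreal (1 + l * h x + 2/3 * (l * h x)\<^sup>2) \<partial>M)"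
    using small
  proof (intro nn_integral_mono_AE, eventually_elim)
    case (elim x)
    show ?case by (rule ennreal_leI, rule exp_le_quadratic) (use elim in simp)
  qed
  also have "\<dots> = ennreal (expectation (\<lambda>x. 1 + l * h x + 2/3 * (l * h x)\<^sup>2))"
    using int_quadratic quadratic_nonneg by (intro nn_integral_eq_integral) auto
  also have "expectation (\<lambda>x. 1 + l * h x + 2/3 * (l * h x)\<^sup>2)
      = 1 + l * expectation h + 2/3 * l\<^sup>2 * expectation (\<lambda>x. (h x)\<^sup>2)"
    using int by (simp add: power_mult_distrib prob_space)
  also have "\<dots> \<le> 1 + 2/3 * l\<^sup>2 * v" using centred var by (simp add: mult_left_mono)
  also have "\<dots> \<le> exp (2/3 * l\<^sup>2 * v)" by (rule exp_ge_add_one_self)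
  finally show ?thesis by (simp add: ennreal_leI)
qed

lemma prob_sum_ge_le_exp:
  assumes small: "AE x in M. l * h x \<le> 1/2" and l: "l > 0"
    and int: "integrable M h" "integrable M (\<lambda>x. (h x)\<^sup>2)"
    and centred: "expectation h = 0" and var: "expectation (\<lambda>x. (h x)\<^sup>2) \<le> v"
  shows "measure (PiM {..<m} (\<lambda>_. M)) {z \<in> space (PiM {..<m} (\<lambda>_. M)). a \<le> (\<Sum>i<m. h (z i))}
     \<le> exp (- l * a + real m * (2/3 * l\<^sup>2 * v))"
proof -
  let ?P = "PiM {..<m} (\<lambda>_. M)"
  interpret P: prob_space ?P by (intro prob_space_PiM prob_space_axioms)
  interpret product_sigma_finite "\<lambda>_. M"
    by (simp add: product_sigma_finite_def sigma_finite_measure_axioms)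
  have [measurable]: "h \<in> borel_measurable M" using int(1) by auto
  have "(\<integral>\<^sup>+z. ennreal (exp (l * (\<Sum>i<m. h (z i)))) * indicator (space ?P) z \<partial>?P)
      = (\<integral>\<^sup>+z. (\<Prod>i\<in>{..<m}. ennreal (exp (l * h (z i)))) \<partial>?P)"
    by (intro nn_integral_cong) (simp add: sum_distrib_left exp_sum prod_ennreal)
  also have "\<dots> = (\<Prod>i\<in>{..<m}. (\<integral>\<^sup>+x. ennreal (exp (l * h x)) \<partial>M))"
    by (intro product_nn_integral_prod) auto
  also have "\<dots> \<le> (\<Prod>i\<in>{..<m}. ennreal (exp (2/3 * l\<^sup>2 * v)))"
    by (intro prod_mono_ennreal nn_integral_exp_le_exp_variance[OF small int centred var])
  also have "\<dots> = ennreal (exp (real m * (2/3 * l\<^sup>2 * v)))"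
    by (simp add: ennreal_power flip: exp_of_nat_mult)
  finally have mgf: "(\<integral>\<^sup>+z. ennreal (exp (l * (\<Sum>i<m. h (z i)))) * indicator (space ?P) z \<partial>?P)
      \<le> ennreal (exp (real m * (2/3 * l\<^sup>2 * v)))" .
  have "emeasure ?P {z \<in> space ?P. a \<le> (\<Sum>i<m. h (z i))} \<le>
      ennreal (exp (- l * a)) *
        (\<integral>\<^sup>+z. ennreal (exp (l * (\<Sum>i<m. h (z i)))) * indicator (space ?P) z \<partial>?P)"
    using l by (intro Chernoff_ineq_nn_integral_ge) auto
  also have "\<dots> \<le> ennreal (exp (- l * a)) * ennreal (exp (real m * (2/3 * l\<^sup>2 * v)))"
    using mgf by (rule mult_left_mono) simp
  also have "\<dots> = ennreal (exp (- l * a + real m * (2/3 * l\<^sup>2 * v)))"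
    by (metis ennreal_mult exp_ge_zero exp_add)
  finally show ?thesis by (simp add: P.emeasure_eq_measure)
qed

lemma bernstein_upper_tail:
  fixes m :: nat
  assumes bounded: "AE x in M. h x \<le> b" and b: "b > 0" and \<epsilon>: "\<epsilon> > 0" and m: "m > 0"
    and int: "integrable M h" "integrable M (\<lambda>x. (h x)\<^sup>2)"
    and centred: "expectation h = 0" and var: "expectation (\<lambda>x. (h x)\<^sup>2) \<le> v"
  shows "measure (PiM {..<m} (\<lambda>_. M))
     {z \<in> space (PiM {..<m} (\<lambda>_. M)).
        m * (sqrt (8/3 * v * \<epsilon> / m) + 4 * b * \<epsilon> / m) \<le> (\<Sum>i<m. h (z i))}
     \<le> exp (- \<epsilon>)"
proof -
  define t where "t = sqrt (8/3 * v * \<epsilon> / m) + 4 * b * \<epsilon> / m"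
  have "0 \<le> expectation (\<lambda>x. (h x)\<^sup>2)" by (rule integral_nonneg_AE) simp
  with var have v: "v \<ge> 0" by linarith
  have variance_nonneg: "0 \<le> 8/3 * v * \<epsilon> / m"
    using v \<epsilon> by (simp add: zero_le_divide_iff)
  have linear_le_t: "4 * b * \<epsilon> / m \<le> t" unfolding t_def using variance_nonneg by simp
  moreover have "4 * b * \<epsilon> / m > 0" using b \<epsilon> m by simp
  ultimately have t: "t > 0" by linarith
  have "sqrt (8/3 * v * \<epsilon> / m) \<le> t" unfolding t_def using b \<epsilon> by simp
  then have variance_le_t: "8/3 * v * \<epsilon> / m \<le> t\<^sup>2"
    by (rule sqrt_le_D)
  \<comment> \<open>the Chernoff exponent is optimised at this choice of the parameter\<close>
  define l where "l = 2 * \<epsilon> / (m * t)"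
  have l: "l > 0" unfolding l_def using \<epsilon> m t by simp
  have lb: "l * b \<le> 1/2" unfolding l_def using linear_le_t m t by (simp add: field_simps)
  have small: "AE x in M. l * h x \<le> 1/2"
    using bounded by eventually_elim (use l lb in \<open>smt (verit) mult_left_mono\<close>)
  have "real m * (2/3 * l\<^sup>2 * v) = (8/3 * v * \<epsilon> / m) * \<epsilon> / t\<^sup>2"
    unfolding l_def using m t by (simp add: field_simps power2_eq_square)
  also have "\<dots> \<le> t\<^sup>2 * \<epsilon> / t\<^sup>2"
    using variance_le_t \<epsilon> by (intro divide_right_mono mult_right_mono) auto
  also have "\<dots> = \<epsilon>" using t by simp
  finally have "- l * (m * t) + real m * (2/3 * l\<^sup>2 * v) \<le> - \<epsilon>"
    unfolding l_def using m t by simp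
  then have "exp (- l * (m * t) + real m * (2/3 * l\<^sup>2 * v)) \<le> exp (- \<epsilon>)" by simp
  with prob_sum_ge_le_exp[OF small l int centred var, of m "m * t"] show ?thesis
    unfolding t_def by linarith
qed

lemma sample_mean_deviation:
  fixes m :: nat
  assumes [measurable]: "g \<in> borel_measurable M"
    and bounded: "AE x in M. \<bar>g x\<bar> \<le> b" and b: "b > 0" and \<epsilon>: "\<epsilon> > 0" and m: "m > 0"
    and var: "expectation (\<lambda>x. (g x)\<^sup>2) \<le> v"
  shows "1 - exp (- \<epsilon>) \<le> measure (PiM {..<m} (\<lambda>_. M))
     {z \<in> space (PiM {..<m} (\<lambda>_. M)).
        (\<Sum>i<m. g (z i)) / m - expectation g \<le> sqrt (8/3 * v * \<epsilon> / m) + 8 * b * \<epsilon> / m}"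
proof -
  let ?P = "PiM {..<m} (\<lambda>_. M)"
  interpret P: prob_space ?P by (intro prob_space_PiM prob_space_axioms)
  define \<mu> where "\<mu> = expectation g"
  define t where "t = sqrt (8/3 * v * \<epsilon> / m) + 4 * (2 * b) * \<epsilon> / m"
  define h where "h x = g x - \<mu>" for x
  have int_g: "integrable M g"
    using bounded by (intro integrable_const_bound[where B = b]) auto
  have "AE x in M. \<bar>(g x)\<^sup>2\<bar> \<le> b\<^sup>2"
    using bounded by eventually_elim (metis abs_ge_zero abs_power2 power2_abs power_mono)
  then have int_g2: "integrable M (\<lambda>x. (g x)\<^sup>2)"
    by (intro integrable_const_bound[where B = "b\<^sup>2"]) auto
  have mean_bounded: "\<mu> \<le> b" "- b \<le> \<mu>"
    unfolding \<mu>_def using bounded int_g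
    by (auto intro!: integral_le_const integral_ge_const elim!: eventually_mono)
  have h_bounded: "AE x in M. h x \<le> 2 * b"
    using bounded by eventually_elim (use mean_bounded in \<open>auto simp: h_def\<close>)
  have int_h: "integrable M h" "integrable M (\<lambda>x. (h x)\<^sup>2)"
    unfolding h_def power2_diff using int_g int_g2 by auto
  have centred: "expectation h = 0" unfolding h_def \<mu>_def using int_g by (simp add: prob_space)
  have "expectation (\<lambda>x. (h x)\<^sup>2) = expectation (\<lambda>x. (g x)\<^sup>2) - \<mu>\<^sup>2"
    unfolding h_def power2_diff using int_g int_g2 by (simp add: prob_space \<mu>_def power2_eq_square)
  with var have h_var: "expectation (\<lambda>x. (h x)\<^sup>2) \<le> v"
    using zero_le_power2[of \<mu>] by linarith
  have tail: "P.prob {z \<in> space ?P. m * t \<le> (\<Sum>i<m. h (z i))} \<le> exp (- \<epsilon>)"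
    unfolding t_def using b \<epsilon> m
    by (intro bernstein_upper_tail[OF h_bounded _ _ _ int_h centred h_var]) auto
  have mean_eq: "(\<Sum>i<m. g (z i)) / m - \<mu> = (\<Sum>i<m. h (z i)) / m" for z
    using m by (simp add: h_def sum_subtractf field_simps)
  have bad_sets: "{z \<in> space ?P. m * t \<le> (\<Sum>i<m. h (z i))} \<in> sets ?P"
    unfolding h_def by measurable
  have "space ?P - {z \<in> space ?P. m * t \<le> (\<Sum>i<m. h (z i))} \<subseteq>
      {z \<in> space ?P. (\<Sum>i<m. g (z i)) / m - \<mu> \<le> t}"
    using m by (auto simp: mean_eq divide_le_eq mult.commute)
  then have "P.prob (space ?P - {z \<in> space ?P. m * t \<le> (\<Sum>i<m. h (z i))}) \<le>
      P.prob {z \<in> space ?P. (\<Sum>i<m. g (z i)) / m - \<mu> \<le> t}"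
    by (intro P.finite_measure_mono) measurable
  then show ?thesis
    using tail P.prob_compl[OF bad_sets] unfolding t_def \<mu>_def by simp
qed

end

section \<open>Left derivatives of convex functions\<close>

lemma diff_divide_diff_swap: "(x - y) / (a - b) = (y - x) / (b - (a::real))"
  by (metis minus_diff_eq minus_divide_divide)

lemma left_deriv_convex_on_eq_SUP:
  fixes g :: "real \<Rightarrow> real"
  assumes cv: "convex_on UNIV g"
  shows "bdd_above ((\<lambda>h. (g a - g (a - h)) / h) ` {0<..})"
    and "left_deriv g a = (SUP h\<in>{0<..}. (g a - g (a - h)) / h)"
proof -
  define Q where "Q h = (g a - g (a - h)) / h" for h
  \<comment> \<open>convexity makes Q decreasing in h and bounded by the slope towards a + 1\<close>
  have bd: "Q h \<le> g (a + 1) - g a" if "h > 0" for h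
  proof -
    have "(g (a-h) - g a) / ((a-h) - a) \<le> (g (a-h) - g (a+1)) / ((a-h) - (a+1))"
         "(g (a-h) - g (a+1)) / ((a-h) - (a+1)) \<le> (g a - g (a+1)) / (a - (a+1))"
      using convex_on_slope_le[OF cv, of "a-h" "a+1" a] that by auto
    then show ?thesis unfolding Q_def diff_divide_diff_swap[of "g (a-h)"] by simp
  qed
  show bdd: "bdd_above ((\<lambda>h. (g a - g (a - h)) / h) ` {0<..})"
    using bd unfolding Q_def by (intro bdd_aboveI2) auto
  have mono: "Q h2 \<le> Q h1" if "0 < h1" "h1 < h2" for h1 h2
  proof -
    have "(g (a-h2) - g a) / ((a-h2) - a) \<le> (g (a-h1) - g a) / ((a-h1) - a)"
      using convex_on_slope_le(2)[OF cv, of "a-h2" a "a-h1"] that by auto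
    then show ?thesis
      unfolding Q_def diff_divide_diff_swap[of "g (a-h2)"] diff_divide_diff_swap[of "g (a-h1)"]
      by simp
  qed
  have lim: "(Q \<longlongrightarrow> (SUP h\<in>{0<..}. Q h)) (at_right 0)"
  proof (rule increasing_tendsto)
    show "\<forall>\<^sub>F n in at_right 0. Q n \<le> (SUP h\<in>{0<..}. Q h)"
      unfolding eventually_at_right_field using bdd
      by (intro exI[of _ 1]) (auto intro: cSUP_upper simp: Q_def)
    fix x assume "x < (SUP h\<in>{0<..}. Q h)"
    then obtain h0 where h0: "h0 > 0" "x < Q h0"
      using less_cSUP_iff[OF _ bdd] by (auto simp: Q_def)
    show "\<forall>\<^sub>F n in at_right 0. x < Q n"
      unfolding eventually_at_right_field
    proof (intro exI[of _ h0] conjI allI impI)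
      fix y assume "0 < y" "y < h0"
      then show "x < Q y" using mono[of y h0] h0 by linarith
    qed (use h0 in auto)
  qed
  show "left_deriv g a = (SUP h\<in>{0<..}. (g a - g (a - h)) / h)"
    using tendsto_Lim[OF _ lim] unfolding left_deriv_def Q_def[abs_def] by simp
qed

lemma convex_on_left_deriv_slope:
  fixes g :: "real \<Rightarrow> real"
  assumes cv: "convex_on UNIV g" and ab: "a < b"
  shows "left_deriv g a \<le> (g b - g a) / (b - a)" and "(g b - g a) / (b - a) \<le> left_deriv g b"
proof -
  show "left_deriv g a \<le> (g b - g a) / (b - a)"
    unfolding left_deriv_convex_on_eq_SUP(2)[OF cv]
  proof (rule cSUP_least)
    fix h :: real assume "h \<in> {0<..}"
    then have h: "h > 0" by simp
    have "(g (a-h) - g a) / ((a-h) - a) \<le> (g (a-h) - g b) / ((a-h) - b)"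
         "(g (a-h) - g b) / ((a-h) - b) \<le> (g a - g b) / (a - b)"
      using convex_on_slope_le[OF cv, of "a-h" b a] h ab by auto
    then show "(g a - g (a - h)) / h \<le> (g b - g a) / (b - a)"
      unfolding diff_divide_diff_swap[of "g (a-h)" "g a"] diff_divide_diff_swap[of "g a" "g b"]
      by simp
  qed simp
  have "(g b - g (b - (b - a))) / (b - a) \<le> (SUP h\<in>{0<..}. (g b - g (b - h)) / h)"
    using ab by (intro cSUP_upper left_deriv_convex_on_eq_SUP(1)[OF cv]) auto
  then show "(g b - g a) / (b - a) \<le> left_deriv g b"
    unfolding left_deriv_convex_on_eq_SUP(2)[OF cv] by simp
qed

lemma convex_on_lipschitz_of_left_deriv:
  fixes g :: "real \<Rightarrow> real"
  assumes cv: "convex_on UNIV g"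
    and L: "\<And>a. \<bar>a\<bar> \<le> T \<Longrightarrow> \<bar>left_deriv g a\<bar> \<le> L"
    and a: "\<bar>a\<bar> \<le> T" and b: "\<bar>b\<bar> \<le> T"
  shows "\<bar>g a - g b\<bar> \<le> L * \<bar>a - b\<bar>"
proof -
  have main: "\<bar>g y - g x\<bar> \<le> L * \<bar>y - x\<bar>" if "x < y" "\<bar>x\<bar> \<le> T" "\<bar>y\<bar> \<le> T" for x y
  proof -
    define s where "s = (g y - g x) / (y - x)"
    have "\<bar>s\<bar> \<le> L"
      using convex_on_left_deriv_slope[OF cv that(1)] L[OF that(2)] L[OF that(3)]
      unfolding s_def by linarith
    moreover have "g y - g x = s * (y - x)" using that unfolding s_def by simp
    ultimately show ?thesis using that by (simp add: abs_mult mult_right_mono)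
  qed
  show ?thesis
  proof (cases a b rule: linorder_cases)
    case less then show ?thesis using main[OF less a b] by (simp add: abs_minus_commute)
  next
    case greater then show ?thesis using main[OF greater b a] by (simp add: abs_minus_commute)
  qed simp
qed

section \<open>Kernel combinations and the reproducing kernel Hilbert space\<close>

lemma sum_lessThan_add:
  fixes f :: "nat \<Rightarrow> 'a::comm_monoid_add"
  shows "(\<Sum>i<n+k. f i) = (\<Sum>i<n. f i) + (\<Sum>j<k. f (n + j))"
  by (induction k) (auto simp: add.assoc)

lemma kinner_sym:
  assumes "\<forall>x y. K x y = K y x"
  shows "kinner K n' d q n c p = kinner K n c p n' d q"
  unfolding kinner_def using assms
  by (subst sum.swap) (auto intro!: sum.cong simp: mult_ac)

definition coeff_append :: "nat \<Rightarrow> (nat \<Rightarrow> real) \<Rightarrow> (nat \<Rightarrow> real) \<Rightarrow> real \<Rightarrow> nat \<Rightarrow> real" where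
  "coeff_append n c d t i = (if i < n then c i else t * d (i - n))"
definition point_append :: "nat \<Rightarrow> (nat \<Rightarrow> 'a) \<Rightarrow> (nat \<Rightarrow> 'a) \<Rightarrow> nat \<Rightarrow> 'a" where
  "point_append n p q i = (if i < n then p i else q (i - n))"

lemma kinner_append_left:
  "kinner K (n+n') (coeff_append n c d t) (point_append n p q) k e r =
     kinner K n c p k e r + t * kinner K n' d q k e r"
  unfolding kinner_def sum_lessThan_add
  by (simp add: coeff_append_def point_append_def sum_distrib_left mult_ac)

lemma kinner_append_right:
  "kinner K k e r (n+n') (coeff_append n c d t) (point_append n p q) =
     kinner K k e r n c p + t * kinner K k e r n' d q"
  unfolding kinner_def sum_lessThan_add
  by (simp add: coeff_append_def point_append_def sum_distrib_left sum.distrib mult_ac)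

lemma quadratic_nonneg_discriminant:
  fixes A B D :: real
  assumes q: "\<And>t. 0 \<le> A + 2 * t * B + t\<^sup>2 * D" and D: "D \<ge> 0"
  shows "B\<^sup>2 \<le> A * D"
proof (cases "D = 0")
  case True
  show ?thesis
  proof (cases "B = 0")
    case False
    have "0 \<le> A + 2 * (-(A+1)/(2*B)) * B + (-(A+1)/(2*B))\<^sup>2 * D" by (rule q)
    with True False show ?thesis by (simp add: field_simps)
  qed (use True q[of 0] in simp)
next
  case False
  then have Dp: "D > 0" using D by simp
  have "0 \<le> A + 2 * (-B/D) * B + (-B/D)\<^sup>2 * D" by (rule q)
  also have "\<dots> = A - B\<^sup>2 / D" using Dp by (simp add: field_simps power2_eq_square)
  finally show ?thesis using Dp by (simp add: field_simps)
qed

lemma kinner_Cauchy_Schwarz: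
  assumes rk: "reproducing_kernel K"
  shows "(kinner K n c p n' d q)\<^sup>2 \<le> kinner K n c p n c p * kinner K n' d q n' d q"
proof (rule quadratic_nonneg_discriminant)
  have sym: "\<forall>x y. K x y = K y x" and psd: "\<And>n c p. kinner K n c p n c p \<ge> 0"
    using rk unfolding reproducing_kernel_def by auto
  show "0 \<le> kinner K n' d q n' d q" by (rule psd)
  fix t
  have "0 \<le> kinner K (n+n') (coeff_append n c d t) (point_append n p q)
                        (n+n') (coeff_append n c d t) (point_append n p q)"
    by (rule psd)
  also have "\<dots> = kinner K n c p n c p + 2 * t * kinner K n c p n' d q
      + t\<^sup>2 * kinner K n' d q n' d q"
    unfolding kinner_append_left kinner_append_right kinner_sym[OF sym, of n' d q n c p]
    by (simp add: algebra_simps power2_eq_square)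
  finally show "0 \<le> kinner K n c p n c p + 2 * t * kinner K n c p n' d q
      + t\<^sup>2 * kinner K n' d q n' d q" .
qed

lemma kcomb_as_kinner: "kcomb K n c p x = kinner K n c p 1 (\<lambda>_. 1) (\<lambda>_. x)"
  unfolding kcomb_def kinner_def by simp

lemma kernel_diag_as_kinner: "K x x = kinner K 1 (\<lambda>_. 1) (\<lambda>_. x) 1 (\<lambda>_. 1) (\<lambda>_. x)"
  unfolding kinner_def by simp

lemma kernel_diag_nonneg: "reproducing_kernel K \<Longrightarrow> K x x \<ge> 0"
  unfolding reproducing_kernel_def kernel_diag_as_kinner[of K x] by blast

lemma kinner_self_nonneg: "reproducing_kernel K \<Longrightarrow> kinner K n c p n c p \<ge> 0"
  unfolding reproducing_kernel_def by blast

lemma abs_kcomb_le: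
  assumes rk: "reproducing_kernel K"
  shows "\<bar>kcomb K n c p x\<bar> \<le> sqrt (kinner K n c p n c p) * sqrt (K x x)"
proof -
  have "(kcomb K n c p x)\<^sup>2 \<le> kinner K n c p n c p * K x x"
    unfolding kcomb_as_kinner kernel_diag_as_kinner[of K x] by (rule kinner_Cauchy_Schwarz[OF rk])
  then have "sqrt ((kcomb K n c p x)\<^sup>2) \<le> sqrt (kinner K n c p n c p * K x x)"
    by (rule real_sqrt_le_mono)
  then show ?thesis by (simp add: real_sqrt_mult)
qed

lemma abs_sqrt_diff_le:
  fixes A B G :: real
  assumes "A \<ge> 0" "B \<ge> 0" "G\<^sup>2 \<le> A * B"
  shows "\<bar>sqrt A - sqrt B\<bar> \<le> sqrt (A - 2 * G + B)"
proof -
  have "\<bar>G\<bar> \<le> sqrt (A * B)" using assms real_sqrt_le_mono[OF assms(3)] by simp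
  then have G: "G \<le> sqrt A * sqrt B" by (simp add: real_sqrt_mult)
  have "(sqrt A - sqrt B)\<^sup>2 = A - 2 * (sqrt A * sqrt B) + B"
    using assms by (simp add: power2_diff)
  also have "\<dots> \<le> A - 2 * G + B" using G by simp
  finally have "sqrt ((sqrt A - sqrt B)\<^sup>2) \<le> sqrt (A - 2 * G + B)"
    by (rule real_sqrt_le_mono)
  then show ?thesis by simp
qed

lemma rkhs_approx_norm_convergent:
  assumes rk: "reproducing_kernel K" and ap: "rkhs_approx K f N c p"
  shows "convergent (\<lambda>n. sqrt (kinner K (N n) (c n) (p n) (N n) (c n) (p n)))"
proof -
  define A where "A n = kinner K (N n) (c n) (p n) (N n) (c n) (p n)" for n
  have "Cauchy (\<lambda>n. sqrt (A n))"
  proof (rule metric_CauchyI)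
    fix e :: real assume e: "e > 0"
    obtain M where M: "\<forall>n\<ge>M. \<forall>k\<ge>M.
        kinner K (N n) (c n) (p n) (N n) (c n) (p n)
        - 2 * kinner K (N n) (c n) (p n) (N k) (c k) (p k)
        + kinner K (N k) (c k) (p k) (N k) (c k) (p k) < e\<^sup>2"
      using ap e unfolding rkhs_approx_def by (meson zero_less_power)
    show "\<exists>M. \<forall>m\<ge>M. \<forall>n\<ge>M. dist (sqrt (A m)) (sqrt (A n)) < e"
    proof (intro exI allI impI)
      fix m n assume mn: "M \<le> m" "M \<le> n"
      have "\<bar>sqrt (A m) - sqrt (A n)\<bar>
          \<le> sqrt (A m - 2 * kinner K (N m) (c m) (p m) (N n) (c n) (p n) + A n)"
        unfolding A_def
        by (intro abs_sqrt_diff_le kinner_self_nonneg[OF rk] kinner_Cauchy_Schwarz[OF rk])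
      also have "\<dots> < sqrt (e\<^sup>2)" using M mn unfolding A_def by (intro real_sqrt_less_mono) auto
      also have "\<dots> = e" using e by simp
      finally show "dist (sqrt (A m)) (sqrt (A n)) < e" by (simp add: dist_real_def)
    qed
  qed
  then show ?thesis unfolding A_def by (simp add: Cauchy_convergent_iff)
qed

lemma rkhs_approx_abs_le:
  assumes rk: "reproducing_kernel K" and ap: "rkhs_approx K f N c p"
    and lim: "(\<lambda>n. sqrt (kinner K (N n) (c n) (p n) (N n) (c n) (p n))) \<longlonglongrightarrow> l"
  shows "\<bar>f x\<bar> \<le> sqrt (K x x) * l"
proof -
  have "(\<lambda>n. \<bar>kcomb K (N n) (c n) (p n) x\<bar>) \<longlonglongrightarrow> \<bar>f x\<bar>"
    using ap unfolding rkhs_approx_def by (intro tendsto_rabs) auto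
  moreover have "(\<lambda>n. sqrt (kinner K (N n) (c n) (p n) (N n) (c n) (p n)) * sqrt (K x x))
      \<longlonglongrightarrow> l * sqrt (K x x)"
    by (intro tendsto_mult lim tendsto_const)
  ultimately have "\<bar>f x\<bar> \<le> l * sqrt (K x x)"
    by (rule LIMSEQ_le) (auto intro: abs_kcomb_le[OF rk])
  then show ?thesis by (simp add: mult.commute)
qed

lemma rkhs_abs_le:
  assumes rk: "reproducing_kernel K" and f: "in_rkhs K f"
  shows "\<bar>f x\<bar> \<le> sqrt (K x x) * rkhs_norm K f"
proof -
  define S where "S = {l. \<exists>N c p. rkhs_approx K f N c p \<and>
      (\<lambda>n. sqrt (kinner K (N n) (c n) (p n) (N n) (c n) (p n))) \<longlonglongrightarrow> l}"
  have bound: "\<bar>f x\<bar> \<le> sqrt (K x x) * l" if "l \<in> S" for l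
    using that rkhs_approx_abs_le[OF rk] unfolding S_def by blast
  obtain N c p where ap: "rkhs_approx K f N c p" using f unfolding in_rkhs_def by blast
  then obtain l where "(\<lambda>n. sqrt (kinner K (N n) (c n) (p n) (N n) (c n) (p n))) \<longlonglongrightarrow> l"
    using rkhs_approx_norm_convergent[OF rk] unfolding convergent_def by blast
  with ap have "S \<noteq> {}" unfolding S_def by blast
  show ?thesis
  proof (cases "K x x = 0")
    case True
    with \<open>S \<noteq> {}\<close> bound show ?thesis by force
  next
    case False
    then have kp: "sqrt (K x x) > 0" using kernel_diag_nonneg[OF rk, of x] by simp
    have "\<bar>f x\<bar> / sqrt (K x x) \<le> Inf S"
      using \<open>S \<noteq> {}\<close> bound kp by (intro cInf_greatest) (auto simp: divide_le_eq mult.commute)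
    then show ?thesis
      unfolding rkhs_norm_def S_def[symmetric] using kp by (simp add: divide_le_eq mult.commute)
  qed
qed

lemma rkhs_borel_measurable:
  assumes "\<forall>x. K x \<in> borel_measurable borel" and "in_rkhs K f"
  shows "f \<in> borel_measurable borel"
proof -
  obtain N c p where ap: "rkhs_approx K f N c p" using assms(2) unfolding in_rkhs_def by blast
  show ?thesis
  proof (rule borel_measurable_LIMSEQ_real)
    show "(\<lambda>i. kcomb K (N i) (c i) (p i) x) \<longlonglongrightarrow> f x" for x
      using ap unfolding rkhs_approx_def by auto
    have [measurable]: "\<And>y. K y \<in> borel_measurable borel" using assms(1) by blast
    show "kcomb K (N i) (c i) (p i) \<in> borel_measurable borel" for i
      unfolding kcomb_def by measurable
  qed
qed

section \<open>Loss bounds\<close>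

definition loss_constant :: "real \<Rightarrow> real \<Rightarrow> real \<Rightarrow> real \<Rightarrow> real" where
  "loss_constant q cq \<kappa> B = 4 * (\<bar>cq\<bar> + 1) * (1 + \<bar>\<kappa>\<bar> + \<bar>B\<bar>) powr (q + 1)"

lemma loss_constant_pos: "loss_constant q cq \<kappa> B > 0"
  unfolding loss_constant_def by (simp add: add_pos_nonneg)

lemma rpow_abs_le_powr:
  assumes "\<bar>a\<bar> \<le> T" "q \<ge> 0"
  shows "rpow \<bar>a\<bar> q \<le> (1 + T) powr q"
proof (cases "a = 0")
  case True
  then show ?thesis
    using assms ge_one_powr_ge_zero[of "1 + T" q] by (auto simp: rpow_def powr_nonneg_iff)
next
  case False
  then have "rpow \<bar>a\<bar> q = \<bar>a\<bar> powr q" unfolding rpow_def by simp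
  also have "\<dots> \<le> (1 + T) powr q" using assms by (intro powr_mono2) auto
  finally show ?thesis .
qed

lemma convex_loss_diff_le:
  fixes g :: "real \<Rightarrow> real"
  assumes cv: "convex_on UNIV g" and growth: "\<And>a. \<bar>left_deriv g a\<bar> \<le> cq * (1 + rpow \<bar>a\<bar> q)"
    and q: "q \<ge> 0" and cq: "cq > 0" and \<kappa>: "\<kappa> \<ge> 0" and B: "B \<ge> 0" and R: "R \<ge> 1"
    and a: "\<bar>a\<bar> \<le> \<kappa> * R + B" and b: "\<bar>b\<bar> \<le> \<kappa> * R + B"
  shows "\<bar>g a - g b\<bar> \<le> loss_constant q cq \<kappa> B * R powr (q + 1)"
proof -
  define T where "T = \<kappa> * R + B"
  define D where "D = 1 + \<kappa> + B"
  have T: "T \<ge> 0" unfolding T_def using \<kappa> B R by simp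
  have TD: "1 + T \<le> R * D"
    unfolding T_def D_def using R B mult_left_mono[of 1 R B] by (simp add: algebra_simps)
  have "\<bar>left_deriv g a'\<bar> \<le> 2 * cq * (1 + T) powr q" if "\<bar>a'\<bar> \<le> T" for a'
  proof -
    have "cq * (1 + rpow \<bar>a'\<bar> q) \<le> cq * ((1 + T) powr q + (1 + T) powr q)"
      using rpow_abs_le_powr[OF that q] ge_one_powr_ge_zero[of "1 + T" q] T q cq
      by (intro mult_left_mono add_mono) auto
    then show ?thesis using growth[of a'] by simp
  qed
  then have "\<bar>g a - g b\<bar> \<le> 2 * cq * (1 + T) powr q * \<bar>a - b\<bar>"
    using a b unfolding T_def[symmetric] by (intro convex_on_lipschitz_of_left_deriv[OF cv])
  also have "\<dots> \<le> 2 * cq * (1 + T) powr q * (2 * (1 + T))"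
    using a b T cq unfolding T_def[symmetric] by (intro mult_left_mono) auto
  also have "\<dots> = 4 * cq * (1 + T) powr (q + 1)"
    using T by (simp add: powr_add)
  also have "\<dots> \<le> 4 * (\<bar>cq\<bar> + 1) * (R * D) powr (q + 1)"
    using TD T q cq by (intro mult_mono powr_mono2) auto
  also have "\<dots> = loss_constant q cq \<kappa> B * R powr (q + 1)"
    unfolding loss_constant_def D_def using R \<kappa> B by (simp add: powr_mult)
  finally show ?thesis .
qed

lemma variance_term_le_Max:
  fixes m :: nat
  assumes R: "R \<ge> 1" and m: "m > 0" and \<tau>: "0 \<le> \<tau>" "\<tau> \<le> 1" and c\<tau>: "c\<tau> \<ge> 0" and \<mu>: "\<mu> \<ge> 0"
    and var: "v \<le> c\<tau> * R powr (2 + q - \<tau>) * rpow \<mu> \<tau>"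
  defines "W \<equiv> Max {R powr (q + 1) / m, (R powr (2 + q - \<tau>) / m) powr (1 / (2 - \<tau>)), \<mu>}"
  shows "v / m \<le> c\<tau> * W\<^sup>2"
proof -
  have W_ge: "R powr (q + 1) / m \<le> W" "(R powr (2 + q - \<tau>) / m) powr (1 / (2 - \<tau>)) \<le> W" "\<mu> \<le> W"
    unfolding W_def by (rule Max_ge; simp)+
  have W: "W > 0" using W_ge(1) R m by (smt (verit) divide_pos_pos powr_gt_zero of_nat_0_less_iff)
  define a where "a = R powr (2 + q - \<tau>) / m"
  have a: "a > 0" unfolding a_def using R m by simp
  have "a = (a powr (1 / (2 - \<tau>))) powr (2 - \<tau>)"
    using a \<tau> by (simp add: powr_powr)
  also have "\<dots> \<le> W powr (2 - \<tau>)" using W_ge(2) \<tau> unfolding a_def by (intro powr_mono2) auto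
  finally have a_le: "a \<le> W powr (2 - \<tau>)" .
  have rpow_le: "rpow \<mu> \<tau> \<le> W powr \<tau>"
    using W W_ge(3) \<mu> \<tau> by (auto simp: rpow_def intro: powr_mono2)
  have "v / m \<le> c\<tau> * (a * rpow \<mu> \<tau>)"
    using var m unfolding a_def by (simp add: divide_right_mono)
  also have "\<dots> \<le> c\<tau> * (W powr (2 - \<tau>) * W powr \<tau>)"
    using a_le rpow_le a c\<tau> by (intro mult_left_mono mult_mono) (auto simp: rpow_def)
  also have "W powr (2 - \<tau>) * W powr \<tau> = W\<^sup>2" using W by (simp flip: powr_add)
  finally show ?thesis .
qed

lemma deviation_bound_le_Max:
  fixes m :: nat
  assumes R: "R \<ge> 1" and m: "m > 0" and \<tau>: "0 \<le> \<tau>" "\<tau> \<le> 1" and c\<tau>: "c\<tau> \<ge> 0" and \<mu>: "\<mu> \<ge> 0"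
    and v: "0 \<le> v" "v \<le> c\<tau> * R powr (2 + q - \<tau>) * rpow \<mu> \<tau>" and \<epsilon>: "\<epsilon> \<ge> 2/3" and c: "c \<ge> 0"
  defines "W \<equiv> Max {R powr (q + 1) / m, (R powr (2 + q - \<tau>) / m) powr (1 / (2 - \<tau>)), \<mu>}"
  shows "sqrt (8/3 * v * \<epsilon> / m) + 8 * (c * R powr (q + 1)) * \<epsilon> / m \<le> (8 * c + 2 * sqrt c\<tau>) * \<epsilon> * W"
proof -
  have W_ge: "R powr (q + 1) / m \<le> W" unfolding W_def by (rule Max_ge) simp_all
  then have W: "W \<ge> 0" using R by (smt (verit) divide_nonneg_nonneg powr_ge_zero of_nat_0_le_iff)
  have "8/3 * v * \<epsilon> / m = (8/3 * \<epsilon>) * (v / m)" by simp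
  also have "\<dots> \<le> (2 * \<epsilon>)\<^sup>2 * (c\<tau> * W\<^sup>2)"
    using variance_term_le_Max[OF R m \<tau> c\<tau> \<mu> v(2)] v(1) \<epsilon> c\<tau>
    unfolding W_def[symmetric] by (intro mult_mono) (auto simp: power2_eq_square)
  finally have "sqrt (8/3 * v * \<epsilon> / m) \<le> 2 * sqrt c\<tau> * \<epsilon> * W"
    using \<epsilon> W c\<tau> by (simp add: real_le_lsqrt real_sqrt_mult power_mult_distrib mult_ac)
  moreover have "8 * (c * R powr (q + 1)) * \<epsilon> / m = 8 * c * \<epsilon> * (R powr (q + 1) / m)" by simp
  moreover have "\<dots> \<le> 8 * c * \<epsilon> * W" using W_ge c \<epsilon> by (intro mult_left_mono) auto
  ultimately show ?thesis by (simp add: algebra_simps)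
qed

section \<open>The sample error\<close>

lemma sample_err_eq_max:
  "sample_err \<rho> V f\<rho> m z f =
     max ((\<Sum>i<m. V (snd (z i)) (f (fst (z i))) - V (snd (z i)) (f\<rho> (fst (z i)))) / m
          - approx_err \<rho> V f\<rho> f) 0"
  unfolding sample_err_def empirical_risk_def approx_err_def
  by (simp add: sum_subtractf diff_divide_distrib)

lemma ln_two_div_ge:
  fixes \<delta> :: real
  assumes "0 < \<delta>" "\<delta> < 1"
  shows "2/3 \<le> ln (2 / \<delta>)"
proof -
  have "ln 2 \<le> ln (2 / \<delta>)" using assms by (subst ln_le_cancel_iff) (auto simp: field_simps)
  then show ?thesis using ln2_ge_two_thirds by linarith
qed

locale kernel_learning_setting = prob_space \<rho>
  for \<rho> :: "('x::{metric_space,second_countable_topology} \<times> real) measure" +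
  fixes Y :: "real set" and V :: "real \<Rightarrow> real \<Rightarrow> real" and K :: "'x \<Rightarrow> 'x \<Rightarrow> real"
    and f\<rho> :: "'x \<Rightarrow> real" and q cq \<tau> c\<tau> :: real
  assumes sets_eq_borel: "sets \<rho> = sets borel" and AE_Y: "AE z in \<rho>. snd z \<in> Y"
    and V_measurable: "(\<lambda>(y, a). V y a) \<in> borel_measurable borel"
    and V_nonneg: "\<forall>y a. V y a \<ge> 0" and V_convex: "\<forall>y. convex_on UNIV (V y)"
    and minimizer: "risk_minimizer \<rho> V f\<rho>"
    and kernel: "reproducing_kernel K" and K_measurable: "\<forall>x. K x \<in> borel_measurable borel"
    and K_diag_bounded: "\<exists>b. \<forall>x. K x x \<le> b" and f\<rho>_bounded: "\<exists>b. \<forall>x. \<bar>f\<rho> x\<bar> \<le> b"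
    and V_zero_bounded: "\<exists>b. \<forall>y\<in>Y. V y 0 \<le> b"
    and q_nonneg: "q \<ge> 0" and cq_pos: "cq > 0"
    and left_deriv_growth: "\<forall>a. \<forall>y\<in>Y. \<bar>left_deriv (V y) a\<bar> \<le> cq * (1 + rpow \<bar>a\<bar> q)"
    and \<tau>_nonneg: "0 \<le> \<tau>" and \<tau>_le_1: "\<tau> \<le> 1" and c\<tau>_pos: "c\<tau> > 0"
    and variance_condition: "\<forall>R'\<ge>1. \<forall>f. in_rkhs K f \<and> rkhs_norm K f \<le> R' \<longrightarrow>
         (\<integral>z. (V (snd z) (f (fst z)) - V (snd z) (f\<rho> (fst z)))\<^sup>2 \<partial>\<rho>)
           \<le> c\<tau> * R' powr (2 + q - \<tau>) * rpow (approx_err \<rho> V f\<rho> f) \<tau>"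
begin

abbreviation kernel_bound :: real where "kernel_bound \<equiv> SUP x. sqrt (K x x)"
abbreviation target_bound :: real where "target_bound \<equiv> SUP x. \<bar>f\<rho> x\<bar>"

lemma sqrt_kernel_diag_le: "sqrt (K x x) \<le> kernel_bound"
proof -
  obtain b where "\<forall>x. K x x \<le> b" using K_diag_bounded by blast
  then have "bdd_above (range (\<lambda>x. sqrt (K x x)))"
    by (intro bdd_aboveI2[of _ _ "sqrt b"]) auto
  then show ?thesis by (rule cSUP_upper2) auto
qed

lemma kernel_bound_nonneg: "kernel_bound \<ge> 0"
  using sqrt_kernel_diag_le[of undefined] real_sqrt_ge_zero[OF kernel_diag_nonneg[OF kernel]]
  by (rule order_trans[rotated])

lemma abs_target_le: "\<bar>f\<rho> x\<bar> \<le> target_bound"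
proof -
  obtain b where "\<forall>x. \<bar>f\<rho> x\<bar> \<le> b" using f\<rho>_bounded by blast
  then have "bdd_above (range (\<lambda>x. \<bar>f\<rho> x\<bar>))" by (intro bdd_aboveI2) auto
  then show ?thesis by (rule cSUP_upper2) auto
qed

lemma target_bound_nonneg: "target_bound \<ge> 0"
  using abs_target_le[of undefined] by linarith

lemma rkhs_ball_abs_le:
  assumes "in_rkhs K f" "rkhs_norm K f \<le> R" "R \<ge> 0"
  shows "\<bar>f x\<bar> \<le> kernel_bound * R"
proof -
  have "\<bar>f x\<bar> \<le> sqrt (K x x) * rkhs_norm K f" by (rule rkhs_abs_le[OF kernel assms(1)])
  also have "\<dots> \<le> sqrt (K x x) * R"
    using assms(2) kernel_diag_nonneg[OF kernel] by (intro mult_left_mono) auto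
  also have "\<dots> \<le> kernel_bound * R" by (rule mult_right_mono[OF sqrt_kernel_diag_le assms(3)])
  finally show ?thesis .
qed

lemma measurable_loss:
  assumes "f \<in> borel_measurable borel"
  shows "(\<lambda>z. V (snd z) (f (fst z))) \<in> borel_measurable \<rho>"
proof -
  have "fst \<in> measurable \<rho> borel" "snd \<in> borel_measurable \<rho>"
    by (simp_all add: measurable_cong_sets[OF sets_eq_borel refl] flip: borel_prod)
  then have "(\<lambda>z. (snd z, f (fst z))) \<in> measurable \<rho> (borel \<Otimes>\<^sub>M borel)"
    using assms by (intro measurable_Pair measurable_compose[of fst \<rho> borel f])
  then have "(\<lambda>z. (snd z, f (fst z))) \<in> measurable \<rho> borel" by (simp add: borel_prod)
  from measurable_compose[OF this V_measurable] show ?thesis by simp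
qed

lemma target_measurable: "f\<rho> \<in> borel_measurable borel"
  using minimizer unfolding risk_minimizer_def by blast

lemma loss_diff_le:
  assumes "y \<in> Y" "R \<ge> 1"
    and "\<bar>a\<bar> \<le> kernel_bound * R + target_bound" "\<bar>b\<bar> \<le> kernel_bound * R + target_bound"
  shows "\<bar>V y a - V y b\<bar> \<le> loss_constant q cq kernel_bound target_bound * R powr (q + 1)"
  using assms V_convex left_deriv_growth q_nonneg cq_pos kernel_bound_nonneg target_bound_nonneg
  by (intro convex_loss_diff_le) auto

lemma integrable_loss:
  assumes "f \<in> borel_measurable borel" "R \<ge> 1" "\<And>x. \<bar>f x\<bar> \<le> kernel_bound * R + target_bound"
  shows "integrable \<rho> (\<lambda>z. V (snd z) (f (fst z)))"
proof -
  obtain b where b: "\<forall>y\<in>Y. V y 0 \<le> b" using V_zero_bounded by blast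
  have zero: "\<bar>0\<bar> \<le> kernel_bound * R + target_bound"
    using kernel_bound_nonneg target_bound_nonneg assms(2) by simp
  have "\<bar>V y (f x)\<bar> \<le> b + loss_constant q cq kernel_bound target_bound * R powr (q + 1)"
    if "y \<in> Y" for x y
    using loss_diff_le[OF that assms(2) assms(3)[of x] zero] bspec[OF b that] V_nonneg
    by (auto simp: abs_le_iff)
  then show ?thesis
    using AE_Y measurable_loss[OF assms(1)]
    by (intro integrable_const_bound) (auto elim!: eventually_mono)
qed

lemma integrable_target_loss: "integrable \<rho> (\<lambda>z. V (snd z) (f\<rho> (fst z)))"
  using abs_target_le kernel_bound_nonneg
  by (intro integrable_loss[OF target_measurable, of 1]) (auto simp: add_increasing)

lemma approx_err_nonneg:
  assumes "f \<in> borel_measurable borel" "integrable \<rho> (\<lambda>z. V (snd z) (f (fst z)))"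
  shows "approx_err \<rho> V f\<rho> f \<ge> 0"
proof -
  have "ennreal (expectation (\<lambda>z. V (snd z) (f\<rho> (fst z))))
      = (\<integral>\<^sup>+z. ennreal (V (snd z) (f\<rho> (fst z))) \<partial>\<rho>)"
    using integrable_target_loss V_nonneg by (intro nn_integral_eq_integral[symmetric]) auto
  also have "\<dots> \<le> (\<integral>\<^sup>+z. ennreal (V (snd z) (f (fst z))) \<partial>\<rho>)"
    using minimizer assms(1) unfolding risk_minimizer_def by blast
  also have "\<dots> = ennreal (expectation (\<lambda>z. V (snd z) (f (fst z))))"
    using assms(2) V_nonneg by (intro nn_integral_eq_integral) auto
  finally show ?thesis
    using V_nonneg unfolding approx_err_def expected_risk_def
    by (subst (asm) ennreal_le_iff) (auto intro: integral_nonneg_AE)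
qed

lemma sample_err_tail:
  fixes m :: nat
  assumes R: "R \<ge> 1" and fs: "in_rkhs K fs" "rkhs_norm K fs \<le> R" and m: "m > 0"
    and \<delta>: "0 < \<delta>" "\<delta> < 1"
  shows "measure (PiM {..<m} (\<lambda>_. \<rho>))
        {z \<in> space (PiM {..<m} (\<lambda>_. \<rho>)).
           sample_err \<rho> V f\<rho> m z fs
           \<le> (8 * loss_constant q cq kernel_bound target_bound + 2 * sqrt c\<tau>) * ln (2 / \<delta>) *
              Max {R powr (q + 1) / real m,
                   (R powr (2 + q - \<tau>) / real m) powr (1 / (2 - \<tau>)),
                   approx_err \<rho> V f\<rho> fs}}
      \<ge> 1 - \<delta> / 2"
proof -
  let ?P = "PiM {..<m} (\<lambda>_. \<rho>)"
  interpret P: prob_space ?P by (intro prob_space_PiM prob_space_axioms)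
  define C where "C = loss_constant q cq kernel_bound target_bound"
  define g where "g z = V (snd z) (fs (fst z)) - V (snd z) (f\<rho> (fst z))" for z
  define \<mu> where "\<mu> = approx_err \<rho> V f\<rho> fs"
  define \<epsilon> where "\<epsilon> = ln (2 / \<delta>)"
  define v where "v = expectation (\<lambda>z. (g z)\<^sup>2)"
  define W where "W = Max {R powr (q + 1) / real m,
    (R powr (2 + q - \<tau>) / real m) powr (1 / (2 - \<tau>)), \<mu>}"
  have fs_measurable: "fs \<in> borel_measurable borel"
    by (rule rkhs_borel_measurable[OF K_measurable fs(1)])
  have bounded: "\<bar>fs x\<bar> \<le> kernel_bound * R + target_bound"
    "\<bar>f\<rho> x\<bar> \<le> kernel_bound * R + target_bound" for x
    using rkhs_ball_abs_le[OF fs, of x] abs_target_le[of x] R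
      kernel_bound_nonneg target_bound_nonneg
    by (auto intro: add_increasing add_increasing2)
  have int_fs: "integrable \<rho> (\<lambda>z. V (snd z) (fs (fst z)))"
    using integrable_loss[OF fs_measurable R] bounded(1) by blast
  have [measurable]: "g \<in> borel_measurable \<rho>"
    unfolding g_def using measurable_loss[OF fs_measurable] measurable_loss[OF target_measurable]
    by measurable
  have g_bounded: "AE z in \<rho>. \<bar>g z\<bar> \<le> C * R powr (q + 1)"
    using AE_Y by eventually_elim (use loss_diff_le R bounded in \<open>simp add: g_def C_def\<close>)
  have mean_g: "expectation g = \<mu>"
    using int_fs integrable_target_loss
    unfolding g_def \<mu>_def approx_err_def expected_risk_def by simp
  have \<mu>: "\<mu> \<ge> 0" unfolding \<mu>_def by (rule approx_err_nonneg[OF fs_measurable int_fs])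
  have v: "0 \<le> v" "v \<le> c\<tau> * R powr (2 + q - \<tau>) * rpow \<mu> \<tau>"
    using variance_condition R fs unfolding v_def g_def \<mu>_def by auto
  have \<epsilon>: "\<epsilon> \<ge> 2/3" "exp (- \<epsilon>) = \<delta> / 2"
    using ln_two_div_ge[OF \<delta>] \<delta> unfolding \<epsilon>_def by (simp_all add: exp_minus)
  have C: "C > 0" unfolding C_def by (rule loss_constant_pos)
  define t where "t = sqrt (8/3 * v * \<epsilon> / m) + 8 * (C * R powr (q + 1)) * \<epsilon> / m"
  define T where "T = (8 * C + 2 * sqrt c\<tau>) * \<epsilon> * W"
  have good: "1 - \<delta> / 2 \<le> P.prob {z \<in> space ?P. (\<Sum>i<m. g (z i)) / m - \<mu> \<le> t}"
    using sample_mean_deviation[OF _ g_bounded _ _ m order.refl, of \<epsilon>] C R \<epsilon>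
    unfolding mean_g v_def t_def by simp
  have "t \<le> T"
    unfolding t_def T_def W_def using R m \<tau>_nonneg \<tau>_le_1 c\<tau>_pos \<mu> v \<epsilon> C
    by (intro deviation_bound_le_Max) auto
  moreover have "0 \<le> T"
    unfolding T_def W_def using C \<epsilon> c\<tau>_pos \<mu>
    by (intro mult_nonneg_nonneg) (auto simp: le_max_iff_disj)
  ultimately have "{z \<in> space ?P. (\<Sum>i<m. g (z i)) / m - \<mu> \<le> t}
      \<subseteq> {z \<in> space ?P. sample_err \<rho> V f\<rho> m z fs \<le> T}"
    by (auto simp: sample_err_eq_max g_def \<mu>_def)
  then have "P.prob {z \<in> space ?P. (\<Sum>i<m. g (z i)) / m - \<mu> \<le> t}
      \<le> P.prob {z \<in> space ?P. sample_err \<rho> V f\<rho> m z fs \<le> T}"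
    by (intro P.finite_measure_mono) (measurable, simp add: sample_err_eq_max g_def[symmetric])
  with good show ?thesis unfolding T_def C_def \<epsilon>_def W_def \<mu>_def by simp
qed

end

theorem mainTheorem16:
  "\<exists>C1 :: real \<Rightarrow> real \<Rightarrow> real \<Rightarrow> real \<Rightarrow> real.
    (\<forall>q cq \<kappa> B. C1 q cq \<kappa> B > 0) \<and>
    (\<forall>(\<rho> :: ('x::{metric_space,second_countable_topology} \<times> real) measure)
       (Y :: real set) (V :: real \<Rightarrow> real \<Rightarrow> real) (K :: 'x \<Rightarrow> 'x \<Rightarrow> real) (f\<rho> :: 'x \<Rightarrow> real)
       (q :: real) (cq :: real) (\<tau> :: real) (c\<tau> :: real) (R :: real) (fs :: 'x \<Rightarrow> real)
       (m :: nat) (\<delta> :: real).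
      \<comment> \<open>setting\<close>
      prob_space \<rho> \<and> sets \<rho> = sets borel \<and> (AE z in \<rho>. snd z \<in> Y) \<and>
      (\<lambda>(y, a). V y a) \<in> borel_measurable borel \<and>
      (\<forall>y a. V y a \<ge> 0) \<and> (\<forall>y. convex_on UNIV (V y)) \<and>
      risk_minimizer \<rho> V f\<rho> \<and>
      reproducing_kernel K \<and> (\<forall>x. K x \<in> borel_measurable borel) \<and>
      \<comment> \<open>(A1)\<close>
      (\<exists>b. \<forall>x. K x x \<le> b) \<and> (\<exists>b. \<forall>x. \<bar>f\<rho> x\<bar> \<le> b) \<and> (\<exists>b. \<forall>y\<in>Y. V y 0 \<le> b) \<and>
      q \<ge> 0 \<and> cq > 0 \<and>
      (\<forall>a. \<forall>y\<in>Y. \<bar>left_deriv (V y) a\<bar> \<le> cq * (1 + rpow \<bar>a\<bar> q)) \<and>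
      \<comment> \<open>(A2)\<close>
      0 \<le> \<tau> \<and> \<tau> \<le> 1 \<and> c\<tau> > 0 \<and>
      (\<forall>R'\<ge>1. \<forall>f. in_rkhs K f \<and> rkhs_norm K f \<le> R' \<longrightarrow>
         (\<integral>z. (V (snd z) (f (fst z)) - V (snd z) (f\<rho> (fst z)))\<^sup>2 \<partial>\<rho>)
           \<le> c\<tau> * R' powr (2 + q - \<tau>) * rpow (approx_err \<rho> V f\<rho> f) \<tau>) \<and>
      \<comment> \<open>data of the theorem\<close>
      R \<ge> 1 \<and> in_rkhs K fs \<and> rkhs_norm K fs \<le> R \<and> m > 0 \<and> 0 < \<delta> \<and> \<delta> < 1
      \<longrightarrow>
      measure (PiM {..<m} (\<lambda>_. \<rho>))
        {z \<in> space (PiM {..<m} (\<lambda>_. \<rho>)).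
           sample_err \<rho> V f\<rho> m z fs
           \<le> (C1 q cq (SUP x. sqrt (K x x)) (SUP x. \<bar>f\<rho> x\<bar>) + 2 * sqrt c\<tau>) * ln (2 / \<delta>) *
              Max {R powr (q + 1) / real m,
                   (R powr (2 + q - \<tau>) / real m) powr (1 / (2 - \<tau>)),
                   approx_err \<rho> V f\<rho> fs}}
      \<ge> 1 - \<delta> / 2)"
proof (intro exI[of _ "\<lambda>q cq \<kappa> B. 8 * loss_constant q cq \<kappa> B"] conjI allI impI)
  show "0 < 8 * loss_constant q cq \<kappa> B" for q cq \<kappa> B :: real
    using loss_constant_pos by simp
qed (elim conjE, rule kernel_learning_setting.sample_err_tail
      [OF kernel_learning_setting.intro[OF _ kernel_learning_setting_axioms.intro]]; assumption)

end
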